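(* Let $\Phi=(A;A^*;\{E_i\}_{i=0}^d;\{E^*_i\}_{i=0}^d)$ be a Leonard system in $\mathcal A$ with eigenvalue sequence $\theta_0,\dots,\theta_d$, and let $c_i$, $\nu$ be as defined below. Then $$(\theta_0-\theta_1)(\theta_0-\theta_2)\cdots(\theta_0-\theta_d)=\nu\,c_1c_2\cdots c_d .$$
   Context: Let $\mathbb K$ be a field, $d\ge 0$ an integer, and $\mathcal A$ a $\mathbb K$-algebra isomorphic to the full matrix algebra $\mathrm{Mat}_{d+1}(\mathbb K)$; $I$ is its identity. An element of $\mathcal A$ is multiplicity-free if it has $d+1$ mutually distinct eigenvalues in $\mathbb K$. If $A$ is multiplicity-free with eigenvalues $\theta_0,\dots,\theta_d$, the primitive idempotent of $A$ associated with $\theta_i$ is $E_i=\prod_{j\ne i}(A-\theta_jI)/(\theta_i-\theta_j)$. A Leonard system in $\mathcal A$ is a sequence $\Phi=(A;A^*;\{E_i\}_{i=0}^d;\{E^*_i\}_{i=0}^d)$ such that (i) $A,A^*\in\mathcal A$ are multiplicity-free; (ii) $E_0,\dots,E_d$ is an ordering of the primitive idempotents of $A$; (iii) $E^*_0,\dots,E^*_d$ is an ordering of the primitive idempotents of $A^*$; (iv) $E_iA^*E_j=0$ if $|i-j|>1$ and $E_iA^*E_j\ne0$ if $|i-j|=1$ ($0\le i,j\le d$); (v) $E^*_iAE^*_j=0$ if $|i-j|>1$ and $E^*_iAE^*_j\ne0$ if $|i-j|=1$ ($0\le i,j\le d$). Here $A^*$ is merely notation (not an adjoint). Write $\theta_i$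 for the eigenvalue of $A$ associated with $E_i$. The scalar $\mathrm{tr}(E_0E^*_0)$ is nonzero; $\nu$ denotes its multiplicative inverse. Standard basis: for an irreducible (left) $\mathcal A$-module $V$ and a nonzero $u\in E_0V$, the vectors $E^*_0u,\dots,E^*_du$ form a basis of $V$; the matrix of $A$ in this basis is tridiagonal and independent of the choice of $u$; $c_i$ ($1\le i\le d$) is its $(i,i-1)$ entry. *)

theory Defs
  imports "Jordan_Normal_Form.Matrix" "Jordan_Normal_Form.Char_Poly"
begin

text \<open>The algebra \<A> is taken to be Mat_{d+1}(K) itself (square matrices of size d+1
  over a field K), with identity 1_m (d+1).\<close>

definition mtrace :: "'a::comm_ring_1 mat \<Rightarrow> 'a" where
  "mtrace M = (\<Sum>i<dim_row M. M $$ (i, i))"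

definition mat_prod_list :: "nat \<Rightarrow> 'a::semiring_1 mat list \<Rightarrow> 'a mat" where
  "mat_prod_list n Ms = foldr (\<lambda>M acc. M * acc) Ms (1\<^sub>m n)"

definition mult_free :: "nat \<Rightarrow> 'a::field mat \<Rightarrow> bool" where
  "mult_free d A \<longleftrightarrow> A \<in> carrier_mat (d+1) (d+1) \<and>
     (\<exists>\<theta>::nat \<Rightarrow> 'a. inj_on \<theta> {..d} \<and> (\<forall>i\<le>d. eigenvalue A (\<theta> i)))"

definition prim_idem :: "nat \<Rightarrow> 'a::field mat \<Rightarrow> (nat \<Rightarrow> 'a) \<Rightarrow> nat \<Rightarrow> 'a mat" where
  "prim_idem d A \<theta> i = mat_prod_list (d+1)
     (map (\<lambda>j. (1 / (\<theta> i - \<theta> j)) \<cdot>\<^sub>m (A - \<theta> j \<cdot>\<^sub>m 1\<^sub>m (d+1)))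
          (filter (\<lambda>j. j \<noteq> i) [0..<d+1]))"

definition idem_ordering :: "nat \<Rightarrow> 'a::field mat \<Rightarrow> (nat \<Rightarrow> 'a mat) \<Rightarrow> (nat \<Rightarrow> 'a) \<Rightarrow> bool" where
  "idem_ordering d A E \<theta> \<longleftrightarrow> inj_on \<theta> {..d} \<and> (\<forall>i\<le>d. eigenvalue A (\<theta> i)) \<and>
     (\<forall>i\<le>d. E i = prim_idem d A \<theta> i)"

definition leonard_system ::
  "nat \<Rightarrow> 'a::field mat \<Rightarrow> 'a mat \<Rightarrow> (nat \<Rightarrow> 'a mat) \<Rightarrow> (nat \<Rightarrow> 'a mat) \<Rightarrow> bool" where
  "leonard_system d A As E Es \<longleftrightarrow>
     mult_free d A \<and> mult_free d As \<and>
     (\<exists>\<theta>. idem_ordering d A E \<theta>) \<and>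
     (\<exists>\<theta>s. idem_ordering d As Es \<theta>s) \<and>
     (\<forall>i\<le>d. \<forall>j\<le>d. (i > j + 1 \<or> j > i + 1) \<longrightarrow> E i * As * E j = 0\<^sub>m (d+1) (d+1)) \<and>
     (\<forall>i\<le>d. \<forall>j\<le>d. (i = j + 1 \<or> j = i + 1) \<longrightarrow> E i * As * E j \<noteq> 0\<^sub>m (d+1) (d+1)) \<and>
     (\<forall>i\<le>d. \<forall>j\<le>d. (i > j + 1 \<or> j > i + 1) \<longrightarrow> Es i * A * Es j = 0\<^sub>m (d+1) (d+1)) \<and>
     (\<forall>i\<le>d. \<forall>j\<le>d. (i = j + 1 \<or> j = i + 1) \<longrightarrow> Es i * A * Es j \<noteq> 0\<^sub>m (d+1) (d+1))"

definition lnu :: "('a::field) mat \<Rightarrow> 'a mat \<Rightarrow> 'a" where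
  "lnu E0 Es0 = 1 / mtrace (E0 * Es0)"

text \<open>Standard basis E*_0 u, ..., E*_d u of the irreducible module V = K^{d+1}
  (column vectors), for u in E_0 V.\<close>
definition std_basis_mat :: "nat \<Rightarrow> (nat \<Rightarrow> 'a::field mat) \<Rightarrow> 'a vec \<Rightarrow> 'a mat" where
  "std_basis_mat d Es u = mat_of_cols (d+1) (map (\<lambda>j. Es j *\<^sub>v u) [0..<d+1])"

definition std_matrix :: "nat \<Rightarrow> 'a::field mat \<Rightarrow> (nat \<Rightarrow> 'a mat) \<Rightarrow> 'a vec \<Rightarrow> 'a mat" where
  "std_matrix d A Es u = (THE B. B \<in> carrier_mat (d+1) (d+1) \<and>
      A * std_basis_mat d Es u = std_basis_mat d Es u * B)"

definition lc :: "nat \<Rightarrow> 'a::field mat \<Rightarrow> (nat \<Rightarrow> 'a mat) \<Rightarrow> 'a vec \<Rightarrow> nat \<Rightarrow> 'a" where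
  "lc d A Es u i = std_matrix d A Es u $$ (i, i - 1)"

end

theory Submission
  imports Defs
begin

(* Work in the standard basis S = (E*_0 u, ..., E*_d u). Since E*_i A E*_j = 0 for i > j + 1,
   the matrix B of A in this basis is upper Hessenberg with subdiagonal c_1, ..., c_d, so the
   (d,0) entry of the matrix of E_0 = prod_{j>0} (A - theta_j I) / (theta_0 - theta_j) is
   c_1 ... c_d / ((theta_0 - theta_1) ... (theta_0 - theta_d)). On the other hand E_0 has rank
   one with range spanned by u = E*_0 u + ... + E*_d u, whose coordinates in S are all 1; hence
   the first column of the matrix of E_0 is constant, and its (0,0) entry is tr(E_0 E*_0) = 1/nu.
   That S is a basis, i.e. E*_k u <> 0 for all k, holds because the change of basis between
   eigenvectors of A and of A* intertwines an unreduced Hessenberg matrix with a diagonal one. *)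

section \<open>Matrix units and similarity\<close>

definition diag_unit_mat :: "nat \<Rightarrow> nat \<Rightarrow> 'a::{zero,one} mat" where
  "diag_unit_mat n k = mat_diag n (\<lambda>i. if i = k then 1 else 0)"

lemma diag_unit_mat_carrier [simp]: "diag_unit_mat n k \<in> carrier_mat n n"
  by (simp add: diag_unit_mat_def)

lemma mat_diag_dim_row_col [simp]: "dim_row (mat_diag n f) = n" "dim_col (mat_diag n f) = n"
  by (simp_all add: mat_diag_def)

lemma diag_unit_mat_dim [simp]: "dim_row (diag_unit_mat n k) = n" "dim_col (diag_unit_mat n k) = n"
  by (simp_all add: diag_unit_mat_def mat_diag_def)

lemma mat_diag_cong: "(\<And>i. i < n \<Longrightarrow> f i = g i) \<Longrightarrow> mat_diag n f = mat_diag n g"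
  unfolding mat_diag_def by (rule eq_matI) auto

lemma mat_diag_mult_vec_index:
  assumes "v \<in> carrier_vec n" "i < n"
  shows "(mat_diag n f *\<^sub>v v) $ i = f i * v $ i"
proof -
  have "(mat_diag n f *\<^sub>v v) $ i = (\<Sum>l\<in>{0..<n}. (if i = l then f l else 0) * v $ l)"
    using assms by (simp add: mat_diag_def scalar_prod_def)
  also have "\<dots> = (\<Sum>l\<in>{0..<n}. if l = i then f i * v $ i else 0)"
    by (rule sum.cong) auto
  finally show ?thesis
    using assms by simp
qed

lemma mult_mat_diag_index:
  assumes "dim_col X = n" "i < dim_row X" "j < n"
  shows "(X * mat_diag n f) $$ (i, j) = X $$ (i, j) * f j"
  using mat_diag_mult_right[OF carrier_matI[OF refl assms(1)]] assms(2,3) by simp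

lemma mult_diag_unit_mat_mult_index:
  fixes X :: "'a::comm_ring_1 mat"
  assumes "X \<in> carrier_mat m n" "W \<in> carrier_mat n p" "i < m" "j < p" "k < n"
  shows "(X * diag_unit_mat n k * W) $$ (i, j) = X $$ (i, k) * W $$ (k, j)"
proof -
  have "(X * diag_unit_mat n k * W) $$ (i, j)
      = (\<Sum>l<n. X $$ (i, l) * (if l = k then 1 else 0) * W $$ (l, j))"
    using assms by (simp add: diag_unit_mat_def mat_diag_mult_right[of _ m] scalar_prod_def
        atLeast0LessThan)
  also have "\<dots> = (\<Sum>l<n. if l = k then X $$ (i, k) * W $$ (k, j) else 0)"
    by (rule sum.cong) auto
  finally show ?thesis
    using assms by simp
qed

lemma mult_diag_unit_mat_mult_vec_index:
  fixes X :: "'a::comm_ring_1 mat"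
  assumes "X \<in> carrier_mat m n" "W \<in> carrier_mat n p" "w \<in> carrier_vec p" "i < m" "k < n"
  shows "((X * diag_unit_mat n k * W) *\<^sub>v w) $ i = X $$ (i, k) * (W *\<^sub>v w) $ k"
proof -
  have "((X * diag_unit_mat n k * W) *\<^sub>v w) $ i = (\<Sum>l<p. (X * diag_unit_mat n k * W) $$ (i, l) * w $ l)"
    using assms by (simp add: scalar_prod_def atLeast0LessThan del: index_mult_mat(1))
  also have "\<dots> = X $$ (i, k) * (\<Sum>l<p. W $$ (k, l) * w $ l)"
    unfolding sum_distrib_left
    by (rule sum.cong) (use assms in \<open>simp_all add: mult_diag_unit_mat_mult_index del: index_mult_mat(1)\<close>)
  finally show ?thesis
    using assms by (simp add: scalar_prod_def atLeast0LessThan)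
qed

lemma mult_diag_unit_mat_vec_index:
  fixes X :: "'a::comm_ring_1 mat"
  assumes "X \<in> carrier_mat m n" "w \<in> carrier_vec n" "i < m" "k < n"
  shows "((X * diag_unit_mat n k) *\<^sub>v w) $ i = X $$ (i, k) * w $ k"
  using mult_diag_unit_mat_mult_vec_index[OF assms(1) one_carrier_mat assms(2-4)] assms
  by simp

lemma assoc_mult_mat_dim:
  "dim_col A = dim_row B \<Longrightarrow> dim_col B = dim_row C \<Longrightarrow> A * B * C = A * (B * C)"
  by (rule assoc_mult_mat[of A "dim_row A" "dim_col A" B "dim_col B" C "dim_col C"]) auto

lemma smult_mat_mult_vec:
  "N \<in> carrier_mat nr n \<Longrightarrow> v \<in> carrier_vec n \<Longrightarrow> (c \<cdot>\<^sub>m N) *\<^sub>v v = c \<cdot>\<^sub>v (N *\<^sub>v v)"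
  by (intro eq_vecI) (simp_all add: scalar_prod_def sum_distrib_left mult.assoc)

lemma inverse_mat_if_injective:
  fixes Y :: "'a::field mat"
  assumes Y: "Y \<in> carrier_mat n n" and inj: "\<And>a. a \<in> carrier_vec n \<Longrightarrow> Y *\<^sub>v a = 0\<^sub>v n \<Longrightarrow> a = 0\<^sub>v n"
  obtains Yi where "Yi \<in> carrier_mat n n" "Y * Yi = 1\<^sub>m n" "Yi * Y = 1\<^sub>m n"
proof -
  have "det Y \<noteq> 0"
    using inj det_0_iff_vec_prod_zero[OF Y] by auto
  then show ?thesis
    using that det_non_zero_imp_unit[OF Y, of undefined] unfolding Units_def ring_mat_def by auto
qed

lemma inverse_mult_intertwine:
  fixes Z :: "'a::comm_ring_1 mat"
  assumes Z: "Z \<in> carrier_mat n n" and Zi: "Zi \<in> carrier_mat n n"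
    and ZZi: "Z * Zi = 1\<^sub>m n" and ZiZ: "Zi * Z = 1\<^sub>m n"
    and M: "M \<in> carrier_mat n n" and MZ: "M * Z = Z * mat_diag n f"
  shows "Zi * M = mat_diag n f * Zi"
proof -
  have "Zi * M = Zi * M * (Z * Zi)"
    using Z Zi M ZZi by (simp del: assoc_mult_mat)
  also have "\<dots> = Zi * (M * Z) * Zi"
    using Z Zi M by (simp add: assoc_mult_mat_dim)
  also have "\<dots> = (Zi * Z) * mat_diag n f * Zi"
    unfolding MZ using Z Zi by (simp add: assoc_mult_mat_dim)
  also have "\<dots> = mat_diag n f * Zi"
    using Zi ZiZ by (simp del: assoc_mult_mat)
  finally show ?thesis .
qed

lemma similar_diag_unit_sandwich_eq_zero_iff:
  fixes X :: "'a::comm_ring_1 mat"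
  assumes P: "P \<in> carrier_mat n n" and Q: "Q \<in> carrier_mat n n"
    and PQ: "P * Q = 1\<^sub>m n" and QP: "Q * P = 1\<^sub>m n"
    and X: "X \<in> carrier_mat n n" and i: "i < n" and j: "j < n"
  shows "P * diag_unit_mat n i * Q * X * (P * diag_unit_mat n j * Q) = 0\<^sub>m n n
    \<longleftrightarrow> (Q * X * P) $$ (i, j) = 0"
proof -
  define M where "M = diag_unit_mat n i * (Q * X * P) * diag_unit_mat n j"
  have M: "M \<in> carrier_mat n n"
    unfolding M_def using P Q X by (meson diag_unit_mat_carrier mult_carrier_mat)
  have M_index: "M $$ (a, b) = (if a = i \<and> b = j then (Q * X * P) $$ (i, j) else 0)"
    if "a < n" "b < n" for a b
    using that i j P Q X
    by (auto simp: M_def diag_unit_mat_def mat_diag_mult_left[of _ n n] mat_diag_mult_right[of _ n]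
        simp del: index_mult_mat(1))
  have "P * diag_unit_mat n i * Q * X * (P * diag_unit_mat n j * Q) = P * M * Q"
    unfolding M_def using P Q X by (simp add: assoc_mult_mat_dim)
  moreover have "P * M * Q = 0\<^sub>m n n \<longleftrightarrow> M = 0\<^sub>m n n"
  proof
    assume "P * M * Q = 0\<^sub>m n n"
    then have "Q * (P * M * Q) * P = 0\<^sub>m n n" using P Q by simp
    moreover have "Q * (P * M * Q) * P = (Q * P) * M * (Q * P)"
      using P Q M by (simp add: assoc_mult_mat_dim)
    ultimately show "M = 0\<^sub>m n n" using M QP by simp
  qed (use P Q in simp)
  moreover have "M = 0\<^sub>m n n \<longleftrightarrow> (Q * X * P) $$ (i, j) = 0"
  proof
    assume "M = 0\<^sub>m n n"
    then show "(Q * X * P) $$ (i, j) = 0" using M_index[OF i j] i j by simp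
  next
    assume entry: "(Q * X * P) $$ (i, j) = 0"
    show "M = 0\<^sub>m n n"
    proof (rule eq_matI)
      fix a b assume "a < dim_row (0\<^sub>m n n :: 'a mat)" "b < dim_col (0\<^sub>m n n :: 'a mat)"
      then show "M $$ (a, b) = 0\<^sub>m n n $$ (a, b)" using M_index entry by simp
    qed (use M in simp_all)
  qed
  ultimately show ?thesis by metis
qed

lemma similar_diag_unit_rescale:
  fixes Z :: "'a::field mat"
  assumes Z: "Z \<in> carrier_mat n n" and Zi: "Zi \<in> carrier_mat n n"
    and ZZi: "Z * Zi = 1\<^sub>m n" and ZiZ: "Zi * Z = 1\<^sub>m n" and \<beta>: "\<And>k. k < n \<Longrightarrow> \<beta> k \<noteq> 0"
  defines "S \<equiv> Z * mat_diag n \<beta>" and "Si \<equiv> mat_diag n (\<lambda>k. 1 / \<beta> k) * Zi"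
  shows "S * Si = 1\<^sub>m n" "Si * S = 1\<^sub>m n"
    and "Z * diag_unit_mat n k * Zi = S * diag_unit_mat n k * Si"
proof -
  let ?D = "mat_diag n \<beta>" and ?Di = "mat_diag n (\<lambda>k. 1 / \<beta> k)"
  have DDi: "?D * ?Di = 1\<^sub>m n" and DiD: "?Di * ?D = 1\<^sub>m n"
    using \<beta> by (simp_all flip: mat_diag_one cong: mat_diag_cong)
  have unit: "?D * diag_unit_mat n k * ?Di = diag_unit_mat n k"
    using \<beta> unfolding diag_unit_mat_def by (simp cong: mat_diag_cong)
  have "S * diag_unit_mat n k * Si = Z * (?D * diag_unit_mat n k * ?Di) * Zi"
    unfolding S_def Si_def using Z Zi by (simp add: assoc_mult_mat_dim del: mat_diag_diag)
  then show "Z * diag_unit_mat n k * Zi = S * diag_unit_mat n k * Si"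
    by (simp only: unit)
  show "S * Si = 1\<^sub>m n"
  proof -
    have "S * Si = Z * (?D * ?Di) * Zi"
      unfolding S_def Si_def using Z Zi by (simp add: assoc_mult_mat_dim del: mat_diag_diag)
    then show ?thesis using DDi Z ZZi by simp
  qed
  show "Si * S = 1\<^sub>m n"
  proof -
    have "Si * S = ?Di * (Zi * Z) * ?D"
      unfolding S_def Si_def using Z Zi by (simp add: assoc_mult_mat_dim del: mat_diag_diag)
    then show ?thesis using DiD ZiZ by simp
  qed
qed

lemma similar_diag_unit_mult_vec_parallel:
  fixes Y :: "'a::field mat"
  assumes Y: "Y \<in> carrier_mat n n" and Yi: "Yi \<in> carrier_mat n n" and k: "k < n"
    and w: "w \<in> carrier_vec n" and x: "x \<in> carrier_vec n"
    and nz: "(Y * diag_unit_mat n k * Yi) *\<^sub>v w \<noteq> 0\<^sub>v n"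
  shows "\<exists>c. (Y * diag_unit_mat n k * Yi) *\<^sub>v x = c \<cdot>\<^sub>v ((Y * diag_unit_mat n k * Yi) *\<^sub>v w)"
proof -
  let ?E = "Y * diag_unit_mat n k * Yi"
  have E_index: "(?E *\<^sub>v v) $ i = Y $$ (i, k) * (Yi *\<^sub>v v) $ k" if "v \<in> carrier_vec n" "i < n" for v i
    by (rule mult_diag_unit_mat_mult_vec_index[OF Y Yi that k])
  have "(Yi *\<^sub>v w) $ k \<noteq> 0"
  proof
    assume "(Yi *\<^sub>v w) $ k = 0"
    then have "?E *\<^sub>v w = 0\<^sub>v n"
      using E_index[OF w] Y by (intro eq_vecI) auto
    with nz show False ..
  qed
  then have "?E *\<^sub>v x = ((Yi *\<^sub>v x) $ k / (Yi *\<^sub>v w) $ k) \<cdot>\<^sub>v (?E *\<^sub>v w)"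
    using E_index[OF x] E_index[OF w] Y by (intro eq_vecI) auto
  then show ?thesis ..
qed

lemma mtrace_mult_comm:
  fixes A :: "'a::comm_ring_1 mat"
  assumes "A \<in> carrier_mat n m" "B \<in> carrier_mat m n"
  shows "mtrace (A * B) = mtrace (B * A)"
proof -
  have "mtrace (A * B) = (\<Sum>i<n. \<Sum>l<m. A $$ (i, l) * B $$ (l, i))"
    using assms by (simp add: mtrace_def scalar_prod_def atLeast0LessThan)
  also have "\<dots> = (\<Sum>l<m. \<Sum>i<n. B $$ (l, i) * A $$ (i, l))"
    by (subst sum.swap) (simp add: mult.commute)
  also have "\<dots> = mtrace (B * A)"
    using assms by (simp add: mtrace_def scalar_prod_def atLeast0LessThan)
  finally show ?thesis .
qed

lemma mtrace_mult_diag_unit_mat: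
  fixes M :: "'a::comm_ring_1 mat"
  assumes "M \<in> carrier_mat n n" "k < n"
  shows "mtrace (M * diag_unit_mat n k) = M $$ (k, k)"
proof -
  have "mtrace (M * diag_unit_mat n k) = (\<Sum>i<n. if i = k then M $$ (k, k) else 0)"
    using assms unfolding mtrace_def diag_unit_mat_def
    by (intro sum.cong) (auto simp: mult_mat_diag_index simp del: index_mult_mat(1))
  then show ?thesis
    using assms by simp
qed

(* E has rank one with range spanned by u, and u has all coordinates 1 in the basis S; so the
   first column of Si * E * S is constant, and by cyclicity of the trace its (0,0) entry is the
   trace of E times the projection onto the first basis vector. *)
lemma rank_one_similar_col0_eq_trace:
  fixes E :: "'a::field mat"
  assumes S: "S \<in> carrier_mat n n" and Si: "Si \<in> carrier_mat n n" and E: "E \<in> carrier_mat n n"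
    and u: "u \<in> carrier_vec n" and Si_u: "Si *\<^sub>v u = vec n (\<lambda>_. 1)"
    and parallel: "\<And>x. x \<in> carrier_vec n \<Longrightarrow> \<exists>c. E *\<^sub>v x = c \<cdot>\<^sub>v u" and i: "i < n"
  shows "(Si * E * S) $$ (i, 0) = mtrace (E * (S * diag_unit_mat n 0 * Si))"
proof -
  have n: "0 < n" using i by simp
  obtain c where c: "E *\<^sub>v col S 0 = c \<cdot>\<^sub>v u"
    using parallel[OF col_carrier_vec[OF n S]] by blast
  have col: "col (Si * E * S) 0 = vec n (\<lambda>_. c)"
  proof -
    have "col (Si * E * S) 0 = (Si * E) *\<^sub>v col S 0"
      using S Si E n by (intro col_mult2[of _ n n _ n]) auto
    also have "\<dots> = Si *\<^sub>v (c \<cdot>\<^sub>v u)"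
      using S Si E n c by (simp add: assoc_mult_mat_vec[of _ n n _ n])
    also have "\<dots> = vec n (\<lambda>_. c)"
      using Si u Si_u by (intro eq_vecI) (simp_all add: mult_mat_vec[of _ n n])
    finally show ?thesis .
  qed
  have col0: "(Si * E * S) $$ (j, 0) = c" if "j < n" for j
  proof -
    have "(Si * E * S) $$ (j, 0) = col (Si * E * S) 0 $ j"
      using S Si E that n by (simp del: col_mult col_mult2 index_mult_mat(1))
    then show ?thesis
      unfolding col using that by simp
  qed
  have "mtrace (E * (S * diag_unit_mat n 0 * Si)) = mtrace ((E * S * diag_unit_mat n 0) * Si)"
    using S Si E by (simp add: assoc_mult_mat_dim)
  also have "\<dots> = mtrace (Si * (E * S * diag_unit_mat n 0))"
    by (rule mtrace_mult_comm[of _ n n]) (use S Si E in \<open>meson mult_carrier_mat diag_unit_mat_carrier\<close>)+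
  also have "Si * (E * S * diag_unit_mat n 0) = (Si * E * S) * diag_unit_mat n 0"
    using S Si E by (simp add: assoc_mult_mat_dim)
  also have "mtrace \<dots> = (Si * E * S) $$ (0, 0)"
    using S Si E n by (simp add: mtrace_mult_diag_unit_mat[of _ n])
  finally show ?thesis
    using col0[OF i] col0[OF n] by simp
qed

section \<open>Primitive idempotents\<close>

lemma mat_prod_list_Nil [simp]: "mat_prod_list n [] = 1\<^sub>m n"
  by (simp add: mat_prod_list_def)

lemma mat_prod_list_Cons [simp]: "mat_prod_list n (M # Ms) = M * mat_prod_list n Ms"
  by (simp add: mat_prod_list_def)

lemma mat_prod_list_carrier:
  "(\<And>M. M \<in> set Ms \<Longrightarrow> M \<in> carrier_mat n n) \<Longrightarrow> mat_prod_list n Ms \<in> carrier_mat n n"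
proof (induction Ms)
  case (Cons M Ms)
  then have "M \<in> carrier_mat n n" "mat_prod_list n Ms \<in> carrier_mat n n" by auto
  then show ?case by (simp add: mult_carrier_mat)
qed simp

lemma mat_prod_list_mult_common_eigenvector:
  fixes f :: "'b \<Rightarrow> 'a::field mat"
  assumes f: "\<And>x. x \<in> set xs \<Longrightarrow> f x \<in> carrier_mat n n"
    and eig: "\<And>x. x \<in> set xs \<Longrightarrow> f x *\<^sub>v v = g x \<cdot>\<^sub>v v" and v: "v \<in> carrier_vec n"
  shows "mat_prod_list n (map f xs) *\<^sub>v v = prod_list (map g xs) \<cdot>\<^sub>v v"
  using f eig
proof (induction xs)
  case (Cons x xs)
  have P: "mat_prod_list n (map f xs) \<in> carrier_mat n n"
    using Cons.prems by (intro mat_prod_list_carrier) auto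
  have "mat_prod_list n (map f (x # xs)) *\<^sub>v v = f x *\<^sub>v (prod_list (map g xs) \<cdot>\<^sub>v v)"
    using Cons P v by (simp add: assoc_mult_mat_vec[of _ n n _ n])
  also have "\<dots> = prod_list (map g (x # xs)) \<cdot>\<^sub>v v"
    using Cons.prems[of x] v by (simp add: mult_mat_vec[of _ n n] smult_smult_assoc mult.commute)
  finally show ?case .
qed (use v in simp)

lemma similar_mat_prod_list:
  fixes P :: "'a::comm_ring_1 mat"
  assumes P: "P \<in> carrier_mat n n" and Q: "Q \<in> carrier_mat n n"
    and PQ: "P * Q = 1\<^sub>m n" and QP: "Q * P = 1\<^sub>m n"
    and f: "\<And>x. x \<in> set xs \<Longrightarrow> f x \<in> carrier_mat n n"
  shows "Q * mat_prod_list n (map f xs) * P = mat_prod_list n (map (\<lambda>x. Q * f x * P) xs)"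
  using f
proof (induction xs)
  case Nil
  show ?case using QP P Q by simp
next
  case (Cons x xs)
  have L: "mat_prod_list n (map f xs) \<in> carrier_mat n n"
    using Cons.prems by (intro mat_prod_list_carrier) auto
  have fx: "f x \<in> carrier_mat n n"
    using Cons.prems by simp
  have "(Q * f x * P) * (Q * mat_prod_list n (map f xs) * P)
      = Q * f x * (P * Q) * mat_prod_list n (map f xs) * P"
    using P Q L fx by (simp add: assoc_mult_mat_dim)
  also have "\<dots> = Q * mat_prod_list n (map f (x # xs)) * P"
    using P Q L fx PQ by (simp add: assoc_mult_mat_dim)
  finally show ?case using Cons by simp
qed

lemma smult_shift_mat_carrier [simp]: "c \<cdot>\<^sub>m (A - \<mu> \<cdot>\<^sub>m 1\<^sub>m n) \<in> carrier_mat n n"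
  by (simp add: minus_carrier_mat)

lemma similar_smult_shift_mat:
  fixes A :: "'a::comm_ring_1 mat"
  assumes A: "A \<in> carrier_mat n n" and P: "P \<in> carrier_mat n n" and Q: "Q \<in> carrier_mat n n"
    and QP: "Q * P = 1\<^sub>m n"
  shows "Q * (c \<cdot>\<^sub>m (A - \<mu> \<cdot>\<^sub>m 1\<^sub>m n)) * P = c \<cdot>\<^sub>m (Q * A * P - \<mu> \<cdot>\<^sub>m 1\<^sub>m n)"
proof -
  have M: "A - \<mu> \<cdot>\<^sub>m 1\<^sub>m n \<in> carrier_mat n n"
    by (simp add: minus_carrier_mat)
  have "Q * (c \<cdot>\<^sub>m (A - \<mu> \<cdot>\<^sub>m 1\<^sub>m n)) * P = c \<cdot>\<^sub>m (Q * (A - \<mu> \<cdot>\<^sub>m 1\<^sub>m n) * P)"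
    by (simp only: mult_smult_distrib[OF Q M] mult_smult_assoc_mat[OF mult_carrier_mat[OF Q M] P])
  also have "Q * (A - \<mu> \<cdot>\<^sub>m 1\<^sub>m n) = Q * A - \<mu> \<cdot>\<^sub>m Q"
    using A Q by (simp add: mult_minus_distrib_mat[of _ n n] mult_smult_distrib[OF Q one_carrier_mat])
  also have "(Q * A - \<mu> \<cdot>\<^sub>m Q) * P = Q * A * P - \<mu> \<cdot>\<^sub>m 1\<^sub>m n"
    using A P Q QP by (simp add: minus_mult_distrib_mat[of _ n n] mult_smult_assoc_mat[of _ n n])
  finally show ?thesis .
qed

lemma smult_shift_mat_mult_eigenvector:
  fixes A :: "'a::comm_ring_1 mat"
  assumes A: "A \<in> carrier_mat n n" and v: "v \<in> carrier_vec n" and ev: "A *\<^sub>v v = \<kappa> \<cdot>\<^sub>v v"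
  shows "(c \<cdot>\<^sub>m (A - \<mu> \<cdot>\<^sub>m 1\<^sub>m n)) *\<^sub>v v = (c * (\<kappa> - \<mu>)) \<cdot>\<^sub>v v"
proof -
  have "(A - \<mu> \<cdot>\<^sub>m 1\<^sub>m n) *\<^sub>v v = \<kappa> \<cdot>\<^sub>v v - \<mu> \<cdot>\<^sub>v v"
    using A v ev by (simp add: minus_mult_distrib_mat_vec smult_mat_mult_vec[OF one_carrier_mat v])
  also have "\<dots> = (\<kappa> - \<mu>) \<cdot>\<^sub>v v"
    using v by (intro eq_vecI) (simp_all add: left_diff_distrib)
  finally have "(A - \<mu> \<cdot>\<^sub>m 1\<^sub>m n) *\<^sub>v v = (\<kappa> - \<mu>) \<cdot>\<^sub>v v" .
  then show ?thesis
    using A v by (simp add: smult_mat_mult_vec[of _ n n] minus_carrier_mat smult_smult_assoc)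
qed

lemma prim_idem_carrier:
  "A \<in> carrier_mat (d+1) (d+1) \<Longrightarrow> prim_idem d A \<theta> k \<in> carrier_mat (d+1) (d+1)"
  unfolding prim_idem_def by (rule mat_prod_list_carrier) (auto simp del: upt_Suc)

lemma similar_prim_idem:
  fixes A :: "'a::field mat"
  assumes A: "A \<in> carrier_mat (d+1) (d+1)" and P: "P \<in> carrier_mat (d+1) (d+1)"
    and Q: "Q \<in> carrier_mat (d+1) (d+1)" and PQ: "P * Q = 1\<^sub>m (d+1)" and QP: "Q * P = 1\<^sub>m (d+1)"
  shows "Q * prim_idem d A \<theta> k * P = prim_idem d (Q * A * P) \<theta> k"
proof -
  let ?f = "\<lambda>A j. (1 / (\<theta> k - \<theta> j)) \<cdot>\<^sub>m (A - \<theta> j \<cdot>\<^sub>m 1\<^sub>m (d+1))"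
  let ?js = "filter (\<lambda>j. j \<noteq> k) [0..<d+1]"
  have "Q * prim_idem d A \<theta> k * P = mat_prod_list (d+1) (map (\<lambda>j. Q * ?f A j * P) ?js)"
    unfolding prim_idem_def by (intro similar_mat_prod_list[OF P Q PQ QP] smult_shift_mat_carrier)
  also have "map (\<lambda>j. Q * ?f A j * P) ?js = map (?f (Q * A * P)) ?js"
    by (rule map_cong[OF refl]) (rule similar_smult_shift_mat[OF A P Q QP])
  finally show ?thesis
    unfolding prim_idem_def .
qed

lemma prim_idem_0:
  "prim_idem d A \<theta> 0
    = mat_prod_list (d+1) (map (\<lambda>j. (1 / (\<theta> 0 - \<theta> j)) \<cdot>\<^sub>m (A - \<theta> j \<cdot>\<^sub>m 1\<^sub>m (d+1))) [1..<d+1])"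
proof -
  have "filter (\<lambda>j. j \<noteq> 0) [0..<d+1] = [1..<d+1]"
    using upt_conv_Cons[of 0 "d+1"] by (simp add: filter_True One_nat_def del: upt_Suc)
  then show ?thesis by (simp only: prim_idem_def)
qed

lemma prim_idem_mult_eigenvector:
  fixes A :: "'a::field mat"
  assumes A: "A \<in> carrier_mat (d+1) (d+1)" and inj: "inj_on \<theta> {..d}"
    and k: "k \<le> d" and j: "j \<le> d" and v: "v \<in> carrier_vec (d+1)" and ev: "A *\<^sub>v v = \<theta> j \<cdot>\<^sub>v v"
  shows "prim_idem d A \<theta> k *\<^sub>v v = (if j = k then v else 0\<^sub>v (d+1))"
proof -
  let ?js = "filter (\<lambda>i. i \<noteq> k) [0..<d+1]"
  let ?g = "\<lambda>i. 1 / (\<theta> k - \<theta> i) * (\<theta> j - \<theta> i)"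
  have "prim_idem d A \<theta> k *\<^sub>v v = prod_list (map ?g ?js) \<cdot>\<^sub>v v"
    unfolding prim_idem_def
    by (rule mat_prod_list_mult_common_eigenvector[OF _ _ v])
      (rule smult_shift_mat_carrier, rule smult_shift_mat_mult_eigenvector[OF A v ev])
  also have "prod_list (map ?g ?js) = (if j = k then 1 else 0)"
  proof (cases "j = k")
    case True
    have "\<forall>x \<in> set (map ?g ?js). x = 1"
    proof
      fix x assume "x \<in> set (map ?g ?js)"
      then obtain i where "i \<in> set ?js" "x = ?g i"
        unfolding set_map by (rule imageE)
      then have i: "i \<le> d" "i \<noteq> k" "x = ?g i"
        by (auto simp del: upt_Suc)
      then have "\<theta> k - \<theta> i \<noteq> 0"
        using inj_onD[OF inj, of k i] k by auto
      then show "x = 1"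
        using i True by simp
    qed
    moreover have "prod_list xs = 1" if "\<forall>x \<in> set xs. x = (1::'a)" for xs
      using that by (induction xs) auto
    ultimately have "prod_list (map ?g ?js) = 1"
      by blast
    then show ?thesis
      using True by simp
  next
    case False
    then have "j \<in> set ?js"
      using j by (auto simp del: upt_Suc)
    then have "?g j \<in> set (map ?g ?js)"
      unfolding set_map by (rule imageI)
    then have "0 \<in> set (map ?g ?js)"
      by simp
    then show ?thesis
      using False by (simp add: prod_list_zero_iff)
  qed
  finally show ?thesis
    using v by auto
qed

lemma idem_ordering_eigenvector_mat:
  fixes A :: "'a::field mat"
  assumes A: "A \<in> carrier_mat (d+1) (d+1)" and io: "idem_ordering d A E \<theta>"
  obtains Y where "Y \<in> carrier_mat (d+1) (d+1)"
    "\<And>k. k \<le> d \<Longrightarrow> E k * Y = Y * diag_unit_mat (d+1) k"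
    "A * Y = Y * mat_diag (d+1) \<theta>" "\<And>k. k \<le> d \<Longrightarrow> col Y k \<noteq> 0\<^sub>v (d+1)"
proof -
  let ?n = "d+1"
  have inj: "inj_on \<theta> {..d}" and E: "\<And>k. k \<le> d \<Longrightarrow> E k = prim_idem d A \<theta> k"
    using io unfolding idem_ordering_def by auto
  have "\<forall>i\<in>{..d}. \<exists>v. eigenvector A v (\<theta> i)"
    using io unfolding idem_ordering_def eigenvalue_def by auto
  then obtain y where "\<And>i. i \<le> d \<Longrightarrow> eigenvector A (y i) (\<theta> i)"
    by (metis atMost_iff)
  then have y: "y i \<in> carrier_vec ?n" "y i \<noteq> 0\<^sub>v ?n" "A *\<^sub>v y i = \<theta> i \<cdot>\<^sub>v y i" if "i \<le> d" for i
    using that A unfolding eigenvector_def by auto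
  define Y where "Y = mat ?n ?n (\<lambda>(i, j). y j $ i)"
  have Y: "Y \<in> carrier_mat ?n ?n"
    unfolding Y_def by simp
  have col_Y: "col Y j = y j" if "j \<le> d" for j
    using y(1)[OF that] that unfolding Y_def by (intro eq_vecI) auto
  have E_carrier: "E k \<in> carrier_mat ?n ?n" if "k \<le> d" for k
    using E[OF that] prim_idem_carrier[OF A] by simp
  have EY: "E k * Y = Y * diag_unit_mat ?n k" if k: "k \<le> d" for k
  proof (rule eq_matI)
    fix i j assume "i < dim_row (Y * diag_unit_mat ?n k)" "j < dim_col (Y * diag_unit_mat ?n k)"
    then have i: "i < ?n" and j: "j < ?n" using Y by auto
    have "(E k * Y) $$ (i, j) = (E k *\<^sub>v y j) $ i"
      using E_carrier[OF k] Y i j col_Y[of j] by (simp flip: col_Y)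
    also have "\<dots> = (if j = k then y j $ i else 0)"
      using E[OF k] prim_idem_mult_eigenvector[OF A inj k _ y(1,3)] i j by simp
    also have "\<dots> = (Y * diag_unit_mat ?n k) $$ (i, j)"
      using i j by (simp add: Y_def diag_unit_mat_def mult_mat_diag_index del: index_mult_mat(1))
    finally show "(E k * Y) $$ (i, j) = (Y * diag_unit_mat ?n k) $$ (i, j)" .
  qed (use Y E_carrier[OF k] in auto)
  have AY: "A * Y = Y * mat_diag ?n \<theta>"
  proof (rule eq_matI)
    fix i j assume "i < dim_row (Y * mat_diag ?n \<theta>)" "j < dim_col (Y * mat_diag ?n \<theta>)"
    then have i: "i < ?n" and j: "j < ?n" using Y by auto
    have "(A * Y) $$ (i, j) = (A *\<^sub>v y j) $ i"
      using A Y i j col_Y[of j] by simp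
    also have "\<dots> = (Y * mat_diag ?n \<theta>) $$ (i, j)"
      using y[of j] i j by (simp add: Y_def mult_mat_diag_index del: index_mult_mat(1))
    finally show "(A * Y) $$ (i, j) = (Y * mat_diag ?n \<theta>) $$ (i, j)" .
  qed (use A Y in auto)
  show ?thesis
    using that[OF Y EY AY] col_Y y(2) by simp
qed

lemma idem_ordering_diagonalization:
  fixes A :: "'a::field mat"
  assumes A: "A \<in> carrier_mat (d+1) (d+1)" and io: "idem_ordering d A E \<theta>"
  obtains Y Yi where "Y \<in> carrier_mat (d+1) (d+1)" "Yi \<in> carrier_mat (d+1) (d+1)"
    "Y * Yi = 1\<^sub>m (d+1)" "Yi * Y = 1\<^sub>m (d+1)"
    "\<And>k. k \<le> d \<Longrightarrow> E k = Y * diag_unit_mat (d+1) k * Yi"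
    "A * Y = Y * mat_diag (d+1) \<theta>"
proof -
  let ?n = "d+1"
  obtain Y where Y: "Y \<in> carrier_mat ?n ?n" and EY: "\<And>k. k \<le> d \<Longrightarrow> E k * Y = Y * diag_unit_mat ?n k"
    and AY: "A * Y = Y * mat_diag ?n \<theta>" and col_Y: "\<And>k. k \<le> d \<Longrightarrow> col Y k \<noteq> 0\<^sub>v ?n"
    using idem_ordering_eigenvector_mat[OF A io] by blast
  have E_carrier: "E k \<in> carrier_mat ?n ?n" if "k \<le> d" for k
    using io that prim_idem_carrier[OF A] unfolding idem_ordering_def by simp
  have "a = 0\<^sub>v ?n" if a: "a \<in> carrier_vec ?n" and Ya: "Y *\<^sub>v a = 0\<^sub>v ?n" for a
  proof (rule eq_vecI)
    fix k assume "k < dim_vec (0\<^sub>v ?n :: 'a vec)"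
    then have k: "k \<le> d" by simp
    have "(Y * diag_unit_mat ?n k) *\<^sub>v a = E k *\<^sub>v (Y *\<^sub>v a)"
      using EY[OF k] E_carrier[OF k] Y a by (simp flip: assoc_mult_mat_vec[of _ ?n ?n _ ?n])
    then have col_k: "Y $$ (i, k) * a $ k = 0" if "i < ?n" for i
      using mult_diag_unit_mat_vec_index[OF Y a that, of k] Ya E_carrier[OF k] k that by simp
    have "\<exists>i<?n. Y $$ (i, k) \<noteq> 0"
    proof (rule ccontr)
      assume "\<not> (\<exists>i<?n. Y $$ (i, k) \<noteq> 0)"
      then have "col Y k = 0\<^sub>v ?n"
        using Y k by (intro eq_vecI) auto
      with col_Y[OF k] show False ..
    qed
    then show "a $ k = 0\<^sub>v ?n $ k"
      using col_k k by auto
  qed (use a in auto)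
  then obtain Yi where Yi: "Yi \<in> carrier_mat ?n ?n" "Y * Yi = 1\<^sub>m ?n" "Yi * Y = 1\<^sub>m ?n"
    using inverse_mat_if_injective[OF Y] by blast
  have E_diag: "E k = Y * diag_unit_mat ?n k * Yi" if k: "k \<le> d" for k
  proof -
    have "E k = E k * Y * Yi"
      using Y Yi E_carrier[OF k] by (simp add: assoc_mult_mat_dim)
    then show ?thesis
      using EY[OF k] by simp
  qed
  show ?thesis
    by (rule that[OF Y Yi E_diag AY])
qed

section \<open>Hessenberg matrices\<close>

definition upper_hessenberg :: "'a::zero mat \<Rightarrow> bool" where
  "upper_hessenberg T \<longleftrightarrow> (\<forall>i<dim_row T. \<forall>j<dim_col T. j + 1 < i \<longrightarrow> T $$ (i, j) = 0)"

definition unreduced_upper_hessenberg :: "'a::zero mat \<Rightarrow> bool" where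
  "unreduced_upper_hessenberg T \<longleftrightarrow>
     upper_hessenberg T \<and> (\<forall>i. 0 < i \<longrightarrow> i < dim_row T \<longrightarrow> T $$ (i, i - 1) \<noteq> 0)"

lemma upper_hessenberg_shift_prod_col0:
  fixes T :: "'a::comm_ring_1 mat"
  assumes T: "T \<in> carrier_mat n n" "upper_hessenberg T" and "i < n" "length xs \<le> i"
  shows "mat_prod_list n (map (\<lambda>x. c x \<cdot>\<^sub>m (T - \<mu> x \<cdot>\<^sub>m 1\<^sub>m n)) xs) $$ (i, 0)
    = (if i = length xs then prod_list (map c xs) * (\<Prod>l\<in>{1..i}. T $$ (l, l - 1)) else 0)"
  using assms(3,4)
proof (induction xs arbitrary: i)
  case (Cons x xs)
  let ?P = "mat_prod_list n (map (\<lambda>x. c x \<cdot>\<^sub>m (T - \<mu> x \<cdot>\<^sub>m 1\<^sub>m n)) xs)"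
  let ?m = "length xs"
  have P: "?P \<in> carrier_mat n n"
    by (intro mat_prod_list_carrier) auto
  have "mat_prod_list n (map (\<lambda>x. c x \<cdot>\<^sub>m (T - \<mu> x \<cdot>\<^sub>m 1\<^sub>m n)) (x # xs)) $$ (i, 0)
      = (\<Sum>l\<in>{0..<n}. c x * (T $$ (i, l) - (if i = l then \<mu> x else 0)) * ?P $$ (l, 0))"
    using Cons.prems T P by (auto simp: scalar_prod_def minus_carrier_mat intro!: sum.cong)
  also have "\<dots> = (\<Sum>l\<in>{0..<n}. if l = ?m then c x * T $$ (i, ?m) * ?P $$ (?m, 0) else 0)"
  proof (rule sum.cong)
    fix l assume l: "l \<in> {0..<n}"
    show "c x * (T $$ (i, l) - (if i = l then \<mu> x else 0)) * ?P $$ (l, 0)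
        = (if l = ?m then c x * T $$ (i, ?m) * ?P $$ (?m, 0) else 0)"
    proof (cases "?m \<le> l")
      case True
      then show ?thesis using Cons.IH[of l] Cons.prems l by auto
    next
      case False
      then show ?thesis using T Cons.prems l by (auto simp: upper_hessenberg_def)
    qed
  qed simp
  also have "\<dots> = c x * T $$ (i, ?m) * ?P $$ (?m, 0)"
    using Cons.prems by simp
  also have "\<dots> = (if i = length (x # xs)
      then prod_list (map c (x # xs)) * (\<Prod>l\<in>{1..i}. T $$ (l, l - 1)) else 0)"
    using Cons.IH[of ?m] Cons.prems T by (auto simp: upper_hessenberg_def prod.nat_ivl_Suc')
  finally show ?case .
qed simp

lemma prim_idem_0_corner:
  fixes T :: "'a::field mat"
  assumes "T \<in> carrier_mat (d+1) (d+1)" "upper_hessenberg T"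
  shows "prim_idem d T \<theta> 0 $$ (d, 0) = (\<Prod>i\<in>{1..d}. T $$ (i, i - 1)) / (\<Prod>i\<in>{1..d}. \<theta> 0 - \<theta> i)"
proof -
  let ?c = "\<lambda>j. 1 / (\<theta> 0 - \<theta> j)"
  have "prim_idem d T \<theta> 0 $$ (d, 0) = prod_list (map ?c [1..<d+1]) * (\<Prod>i\<in>{1..d}. T $$ (i, i - 1))"
    unfolding prim_idem_0 using upper_hessenberg_shift_prod_col0[OF assms, of d "[1..<d+1]" ?c \<theta>]
    by (simp del: upt_Suc)
  also have "prod_list (map ?c [1..<d+1]) = (\<Prod>j\<in>set [1..<d+1]. ?c j)"
    by (rule prod.distinct_set_conv_list[symmetric]) simp
  also have "\<dots> = 1 / (\<Prod>i\<in>{1..d}. \<theta> 0 - \<theta> i)"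
    by (simp add: atLeastLessThanSuc_atLeastAtMost prod_dividef del: upt_Suc)
  finally show ?thesis
    by simp
qed

(* Row k of H is a left eigenvector of R; along the nonzero subdiagonal of R, a vanishing first
   entry forces the whole row to vanish, contradicting the invertibility of H. *)
lemma unreduced_upper_hessenberg_left_eigen_col0_nonzero:
  fixes H :: "'a::idom mat"
  assumes H: "H \<in> carrier_mat n n" and G: "G \<in> carrier_mat n n" and HG: "H * G = 1\<^sub>m n"
    and R: "R \<in> carrier_mat n n" "unreduced_upper_hessenberg R"
    and HR: "H * R = mat_diag n \<kappa> * H" and k: "k < n"
  shows "H $$ (k, 0) \<noteq> 0"
proof
  assume H0: "H $$ (k, 0) = 0"
  have HR_entry: "(\<Sum>l<n. H $$ (k, l) * R $$ (l, m)) = \<kappa> k * H $$ (k, m)" if "m < n" for m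
  proof -
    have "(H * R) $$ (k, m) = (mat_diag n \<kappa> * H) $$ (k, m)" using HR by simp
    then show ?thesis
      using H R k that by (simp add: mat_diag_mult_left[OF H] scalar_prod_def atLeast0LessThan)
  qed
  have "\<forall>l\<le>m. H $$ (k, l) = 0" if "m < n" for m
    using that
  proof (induction m)
    case (Suc m)
    then have row: "\<forall>l\<le>m. H $$ (k, l) = 0" by simp
    have "(\<Sum>l<n. H $$ (k, l) * R $$ (l, m)) = (\<Sum>l<n. if l = Suc m then H $$ (k, Suc m) * R $$ (Suc m, m) else 0)"
    proof (rule sum.cong)
      fix l assume "l \<in> {..<n}"
      then show "H $$ (k, l) * R $$ (l, m) = (if l = Suc m then H $$ (k, Suc m) * R $$ (Suc m, m) else 0)"
        using row R Suc.prems by (cases "l \<le> m") (auto simp: unreduced_upper_hessenberg_def upper_hessenberg_def)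
    qed simp
    then have "H $$ (k, Suc m) * R $$ (Suc m, m) = 0"
      using HR_entry[of m] row Suc.prems by simp
    moreover have "R $$ (Suc m, m) \<noteq> 0"
      using R Suc.prems by (auto simp: unreduced_upper_hessenberg_def)
    ultimately show ?case
      using row le_Suc_eq by auto
  qed (use H0 in simp)
  then have "\<forall>l<n. H $$ (k, l) = 0"
    by blast
  then have "(H * G) $$ (k, k) = 0"
    using H G k by (simp add: scalar_prod_def)
  then show False
    using HG k by simp
qed

section \<open>The standard basis\<close>

lemma std_basis_mat_carrier: "std_basis_mat d Es u \<in> carrier_mat (d+1) (d+1)"
  unfolding std_basis_mat_def
  using mat_of_cols_carrier[of "d+1" "map (\<lambda>j. Es j *\<^sub>v u) [0..<d+1]"] by (simp del: upt_Suc)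

lemma std_basis_mat_eq:
  fixes Z :: "'a::field mat"
  assumes Z: "Z \<in> carrier_mat (d+1) (d+1)" and Zi: "Zi \<in> carrier_mat (d+1) (d+1)"
    and Es: "\<And>k. k \<le> d \<Longrightarrow> Es k = Z * diag_unit_mat (d+1) k * Zi" and u: "u \<in> carrier_vec (d+1)"
  shows "std_basis_mat d Es u = Z * mat_diag (d+1) (\<lambda>k. (Zi *\<^sub>v u) $ k)"
proof (rule eq_matI)
  fix i j assume "i < dim_row (Z * mat_diag (d+1) (\<lambda>k. (Zi *\<^sub>v u) $ k))"
    "j < dim_col (Z * mat_diag (d+1) (\<lambda>k. (Zi *\<^sub>v u) $ k))"
  then have i: "i < d+1" and j: "j < d+1"
    using Z carrier_matD[OF mat_diag_dim] by auto
  have "std_basis_mat d Es u $$ (i, j) = (Es j *\<^sub>v u) $ i"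
    using i j by (simp add: std_basis_mat_def mat_of_cols_index del: upt_Suc)
  also have "\<dots> = Z $$ (i, j) * (Zi *\<^sub>v u) $ j"
    using Es[of j] mult_diag_unit_mat_mult_vec_index[OF Z Zi u i j] j by simp
  also have "\<dots> = (Z * mat_diag (d+1) (\<lambda>k. (Zi *\<^sub>v u) $ k)) $$ (i, j)"
    using Z i j by (simp add: mult_mat_diag_index del: index_mult_mat(1))
  finally show "std_basis_mat d Es u $$ (i, j) = (Z * mat_diag (d+1) (\<lambda>k. (Zi *\<^sub>v u) $ k)) $$ (i, j)" .
qed (use Z std_basis_mat_carrier in auto)

lemma std_matrix_eq:
  fixes A :: "'a::field mat"
  assumes A: "A \<in> carrier_mat (d+1) (d+1)" and Si: "Si \<in> carrier_mat (d+1) (d+1)"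
    and SSi: "std_basis_mat d Es u * Si = 1\<^sub>m (d+1)" and SiS: "Si * std_basis_mat d Es u = 1\<^sub>m (d+1)"
  shows "std_matrix d A Es u = Si * A * std_basis_mat d Es u"
  unfolding std_matrix_def
proof (rule the_equality)
  let ?S = "std_basis_mat d Es u"
  have S: "?S \<in> carrier_mat (d+1) (d+1)"
    by (rule std_basis_mat_carrier)
  have "?S * (Si * A * ?S) = (?S * Si) * A * ?S"
    using S Si A by (simp add: assoc_mult_mat_dim)
  then show "Si * A * ?S \<in> carrier_mat (d+1) (d+1) \<and> A * ?S = ?S * (Si * A * ?S)"
    using S Si A SSi by simp
  fix B assume "B \<in> carrier_mat (d+1) (d+1) \<and> A * ?S = ?S * B"
  then have B: "B \<in> carrier_mat (d+1) (d+1)" and AS: "A * ?S = ?S * B"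
    by auto
  have "Si * A * ?S = Si * (?S * B)"
    using S Si A AS by (simp add: assoc_mult_mat_dim)
  also have "\<dots> = (Si * ?S) * B"
    using S Si B by (simp add: assoc_mult_mat_dim)
  finally show "B = Si * A * ?S"
    using SiS B by simp
qed

section \<open>Leonard systems\<close>

lemma leonard_system_dual: "leonard_system d A As E Es \<Longrightarrow> leonard_system d As A Es E"
  unfolding leonard_system_def by blast

lemma leonard_system_carrier:
  "leonard_system d A As E Es \<Longrightarrow> A \<in> carrier_mat (d+1) (d+1)"
  unfolding leonard_system_def mult_free_def by blast

lemma leonard_system_unreduced_upper_hessenberg:
  fixes A :: "'a::field mat"
  assumes ls: "leonard_system d A As E Es"
    and P: "P \<in> carrier_mat (d+1) (d+1)" and Q: "Q \<in> carrier_mat (d+1) (d+1)"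
    and PQ: "P * Q = 1\<^sub>m (d+1)" and QP: "Q * P = 1\<^sub>m (d+1)"
    and Es: "\<And>k. k \<le> d \<Longrightarrow> Es k = P * diag_unit_mat (d+1) k * Q"
  shows "unreduced_upper_hessenberg (Q * A * P)"
proof -
  have A: "A \<in> carrier_mat (d+1) (d+1)"
    by (rule leonard_system_carrier[OF ls])
  have entry_eq_0_iff: "(Q * A * P) $$ (i, j) = 0 \<longleftrightarrow> Es i * A * Es j = 0\<^sub>m (d+1) (d+1)"
    if "i \<le> d" "j \<le> d" for i j
    using similar_diag_unit_sandwich_eq_zero_iff[OF P Q PQ QP A, of i j] Es that by simp
  have "(Q * A * P) $$ (i, j) = 0" if "i < d+1" "j < d+1" "j + 1 < i" for i j
    using ls that entry_eq_0_iff[of i j] unfolding leonard_system_def by simp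
  moreover have "(Q * A * P) $$ (i, i - 1) \<noteq> 0" if "0 < i" "i < d+1" for i
  proof -
    obtain j where i: "i = Suc j"
      using \<open>0 < i\<close> gr0_implies_Suc by blast
    have "\<forall>i\<le>d. \<forall>j\<le>d. (i = j + 1 \<or> j = i + 1) \<longrightarrow> Es i * A * Es j \<noteq> 0\<^sub>m (d+1) (d+1)"
      using ls unfolding leonard_system_def by blast
    moreover have "j \<le> d" "j + 1 \<le> d"
      using that i by auto
    ultimately have "Es (j + 1) * A * Es j \<noteq> 0\<^sub>m (d+1) (d+1)"
      by blast
    then show ?thesis
      using entry_eq_0_iff[of i j] that i by simp
  qed
  ultimately show ?thesis
    using P Q A by (simp add: unreduced_upper_hessenberg_def upper_hessenberg_def del: index_mult_mat(1))
qed

(* Zi * Y intertwines Yi * As * Y (unreduced Hessenberg, since E_i As E_j vanishes exactly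
   when |i - j| > 1) with the diagonal matrix of eigenvalues of As. *)
lemma leonard_system_change_of_basis_col0_nonzero:
  fixes A As :: "'a::field mat"
  assumes ls: "leonard_system d A As E Es"
    and Y: "Y \<in> carrier_mat (d+1) (d+1)" "Yi \<in> carrier_mat (d+1) (d+1)"
      "Y * Yi = 1\<^sub>m (d+1)" "Yi * Y = 1\<^sub>m (d+1)"
    and E: "\<And>k. k \<le> d \<Longrightarrow> E k = Y * diag_unit_mat (d+1) k * Yi"
    and Z: "Z \<in> carrier_mat (d+1) (d+1)" "Zi \<in> carrier_mat (d+1) (d+1)"
      "Z * Zi = 1\<^sub>m (d+1)" "Zi * Z = 1\<^sub>m (d+1)"
    and AsZ: "As * Z = Z * mat_diag (d+1) \<theta>s" and k: "k \<le> d"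
  shows "(Zi * Y) $$ (k, 0) \<noteq> 0"
proof -
  let ?n = "d+1"
  have As: "As \<in> carrier_mat ?n ?n"
    using leonard_system_carrier[OF leonard_system_dual[OF ls]] .
  define H where "H = Zi * Y"
  have H: "H \<in> carrier_mat ?n ?n"
    unfolding H_def using Y Z by simp
  have R: "Yi * As * Y \<in> carrier_mat ?n ?n" "unreduced_upper_hessenberg (Yi * As * Y)"
    using Y As leonard_system_unreduced_upper_hessenberg[OF leonard_system_dual[OF ls] Y E] by auto
  have "H * (Yi * Z) = Zi * (Y * Yi) * Z"
    unfolding H_def using Y(1,2) Z(1,2) by (simp add: assoc_mult_mat_dim)
  also have "\<dots> = 1\<^sub>m ?n"
    using Y Z by (simp del: assoc_mult_mat)
  finally have HG: "H * (Yi * Z) = 1\<^sub>m ?n" .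
  have "H * (Yi * As * Y) = Zi * (Y * Yi) * As * Y"
    unfolding H_def using Y(1,2) Z(1,2) As by (simp add: assoc_mult_mat_dim)
  also have "\<dots> = (Zi * As) * Y"
    using Y Z As by (simp del: assoc_mult_mat)
  also have "\<dots> = mat_diag ?n \<theta>s * H"
    unfolding inverse_mult_intertwine[OF Z As AsZ] H_def using Y(1,2) Z(1,2)
    by (simp add: assoc_mult_mat_dim)
  finally have HR: "H * (Yi * As * Y) = mat_diag ?n \<theta>s * H" .
  show ?thesis
    using unreduced_upper_hessenberg_left_eigen_col0_nonzero[OF H _ HG R HR] Y Z k
    unfolding H_def by simp
qed

lemma leonard_system_coords_nonzero:
  fixes A As :: "'a::field mat"
  assumes ls: "leonard_system d A As E Es"
    and u: "u \<noteq> 0\<^sub>v (d+1)" and w: "w \<in> carrier_vec (d+1)" "u = E 0 *\<^sub>v w"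
  obtains Z Zi where "Z \<in> carrier_mat (d+1) (d+1)" "Zi \<in> carrier_mat (d+1) (d+1)"
    "Z * Zi = 1\<^sub>m (d+1)" "Zi * Z = 1\<^sub>m (d+1)"
    "\<And>k. k \<le> d \<Longrightarrow> Es k = Z * diag_unit_mat (d+1) k * Zi"
    "\<And>k. k \<le> d \<Longrightarrow> (Zi *\<^sub>v u) $ k \<noteq> 0"
proof -
  let ?n = "d+1"
  have A: "A \<in> carrier_mat ?n ?n" and As: "As \<in> carrier_mat ?n ?n"
    using leonard_system_carrier ls leonard_system_dual by blast+
  obtain \<theta> \<theta>s where "idem_ordering d A E \<theta>" "idem_ordering d As Es \<theta>s"
    using ls unfolding leonard_system_def by blast
  obtain Y Yi where Y: "Y \<in> carrier_mat ?n ?n" "Yi \<in> carrier_mat ?n ?n"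
      "Y * Yi = 1\<^sub>m ?n" "Yi * Y = 1\<^sub>m ?n" and E: "\<And>k. k \<le> d \<Longrightarrow> E k = Y * diag_unit_mat ?n k * Yi"
    using idem_ordering_diagonalization[OF A \<open>idem_ordering d A E \<theta>\<close>] by blast
  obtain Z Zi where Z: "Z \<in> carrier_mat ?n ?n" "Zi \<in> carrier_mat ?n ?n"
      "Z * Zi = 1\<^sub>m ?n" "Zi * Z = 1\<^sub>m ?n" and Es: "\<And>k. k \<le> d \<Longrightarrow> Es k = Z * diag_unit_mat ?n k * Zi"
      and AsZ: "As * Z = Z * mat_diag ?n \<theta>s"
    using idem_ordering_diagonalization[OF As \<open>idem_ordering d As Es \<theta>s\<close>] by blast
  have E0: "Y * diag_unit_mat ?n 0 * Yi \<in> carrier_mat ?n ?n"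
    using Y by (meson mult_carrier_mat diag_unit_mat_carrier)
  have "Zi *\<^sub>v u = (Zi * (Y * diag_unit_mat ?n 0 * Yi)) *\<^sub>v w"
    unfolding w(2) E[OF le0] by (rule assoc_mult_mat_vec[OF Z(2) E0 w(1), symmetric])
  also have "Zi * (Y * diag_unit_mat ?n 0 * Yi) = (Zi * Y) * diag_unit_mat ?n 0 * Yi"
    using Y(1,2) Z(1,2) by (simp add: assoc_mult_mat_dim)
  finally have "Zi *\<^sub>v u = ((Zi * Y) * diag_unit_mat ?n 0 * Yi) *\<^sub>v w" .
  moreover have "Zi * Y \<in> carrier_mat ?n ?n"
    using Y Z by simp
  ultimately have coords: "(Zi *\<^sub>v u) $ k = (Zi * Y) $$ (k, 0) * (Yi *\<^sub>v w) $ 0" if "k \<le> d" for k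
    using mult_diag_unit_mat_mult_vec_index[OF _ Y(2) w(1), of "Zi * Y" ?n k 0] that
    by (simp del: index_mult_mat(1) index_mult_mat_vec assoc_mult_mat)
  have "(Yi *\<^sub>v w) $ 0 \<noteq> 0"
  proof
    assume "(Yi *\<^sub>v w) $ 0 = 0"
    then have "u = 0\<^sub>v ?n"
      unfolding w(2) E[OF le0] using mult_diag_unit_mat_mult_vec_index[OF Y(1,2) w(1)] Y
      by (intro eq_vecI) auto
    with u show False ..
  qed
  then show ?thesis
    using that[OF Z Es] coords leonard_system_change_of_basis_col0_nonzero[OF ls Y E Z AsZ] by simp
qed

lemma leonard_system_std_basis_inverse:
  fixes A As :: "'a::field mat"
  assumes ls: "leonard_system d A As E Es" and u: "u \<in> carrier_vec (d+1)" "u \<noteq> 0\<^sub>v (d+1)"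
    and w: "w \<in> carrier_vec (d+1)" "u = E 0 *\<^sub>v w"
  obtains Si where "Si \<in> carrier_mat (d+1) (d+1)"
    "std_basis_mat d Es u * Si = 1\<^sub>m (d+1)" "Si * std_basis_mat d Es u = 1\<^sub>m (d+1)"
    "\<And>k. k \<le> d \<Longrightarrow> Es k = std_basis_mat d Es u * diag_unit_mat (d+1) k * Si"
    "Si *\<^sub>v u = vec (d+1) (\<lambda>_. 1)"
proof -
  let ?n = "d+1"
  obtain Z Zi where Z: "Z \<in> carrier_mat ?n ?n" "Zi \<in> carrier_mat ?n ?n"
      "Z * Zi = 1\<^sub>m ?n" "Zi * Z = 1\<^sub>m ?n" and Es: "\<And>k. k \<le> d \<Longrightarrow> Es k = Z * diag_unit_mat ?n k * Zi"
      and \<beta>: "\<And>k. k \<le> d \<Longrightarrow> (Zi *\<^sub>v u) $ k \<noteq> 0"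
    using leonard_system_coords_nonzero[OF ls u(2) w] by blast
  define b where "b = Zi *\<^sub>v u"
  have b: "b \<in> carrier_vec ?n" "\<And>k. k < ?n \<Longrightarrow> b $ k \<noteq> 0"
    unfolding b_def using Z u \<beta> by auto
  define Si where "Si = mat_diag ?n (\<lambda>k. 1 / b $ k) * Zi"
  have S: "std_basis_mat d Es u = Z * mat_diag ?n (\<lambda>k. b $ k)"
    unfolding b_def by (rule std_basis_mat_eq[OF Z(1,2) Es u(1)])
  have "(Z * mat_diag ?n (\<lambda>k. b $ k)) * Si = 1\<^sub>m ?n" "Si * (Z * mat_diag ?n (\<lambda>k. b $ k)) = 1\<^sub>m ?n"
    "\<And>k. Z * diag_unit_mat ?n k * Zi = (Z * mat_diag ?n (\<lambda>k. b $ k)) * diag_unit_mat ?n k * Si"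
    unfolding Si_def using similar_diag_unit_rescale[OF Z, of "\<lambda>k. b $ k"] b(2) by auto
  note rescale = this[folded S]
  have Si: "Si \<in> carrier_mat ?n ?n"
    unfolding Si_def using Z by (meson mult_carrier_mat mat_diag_dim)
  have "Si *\<^sub>v u = mat_diag ?n (\<lambda>k. 1 / b $ k) *\<^sub>v b"
    unfolding Si_def b_def using Z u by (simp add: assoc_mult_mat_vec[of _ ?n ?n _ ?n])
  also have "\<dots> = vec ?n (\<lambda>_. 1)"
    using b by (intro eq_vecI) (simp_all add: mat_diag_mult_vec_index del: index_mult_mat_vec)
  finally have "Si *\<^sub>v u = vec ?n (\<lambda>_. 1)" .
  moreover have "Es k = std_basis_mat d Es u * diag_unit_mat ?n k * Si" if "k \<le> d" for k
    using Es[OF that] rescale(3) by simp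
  ultimately show ?thesis
    using that Si rescale(1,2) by blast
qed

lemma leonard_system_std_matrix:
  fixes A As :: "'a::field mat"
  assumes ls: "leonard_system d A As E Es" and u: "u \<in> carrier_vec (d+1)" "u \<noteq> 0\<^sub>v (d+1)"
    and w: "w \<in> carrier_vec (d+1)" "u = E 0 *\<^sub>v w"
  shows "std_matrix d A Es u \<in> carrier_mat (d+1) (d+1)"
    and "unreduced_upper_hessenberg (std_matrix d A Es u)"
proof -
  have A: "A \<in> carrier_mat (d+1) (d+1)"
    by (rule leonard_system_carrier[OF ls])
  obtain Si where Si: "Si \<in> carrier_mat (d+1) (d+1)"
    "std_basis_mat d Es u * Si = 1\<^sub>m (d+1)" "Si * std_basis_mat d Es u = 1\<^sub>m (d+1)"
    and Es: "\<And>k. k \<le> d \<Longrightarrow> Es k = std_basis_mat d Es u * diag_unit_mat (d+1) k * Si"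
    using leonard_system_std_basis_inverse[OF ls u w] by blast
  show "std_matrix d A Es u \<in> carrier_mat (d+1) (d+1)"
    unfolding std_matrix_eq[OF A Si] using A Si(1) std_basis_mat_carrier by (meson mult_carrier_mat)
  show "unreduced_upper_hessenberg (std_matrix d A Es u)"
    unfolding std_matrix_eq[OF A Si]
    by (rule leonard_system_unreduced_upper_hessenberg[OF ls std_basis_mat_carrier Si Es])
qed

lemma leonard_system_trace_E0_Es0:
  fixes A As :: "'a::field mat"
  assumes ls: "leonard_system d A As E Es" and io: "idem_ordering d A E \<theta>"
    and u: "u \<in> carrier_vec (d+1)" "u \<noteq> 0\<^sub>v (d+1)"
    and w: "w \<in> carrier_vec (d+1)" "u = E 0 *\<^sub>v w"
  shows "mtrace (E 0 * Es 0) = prim_idem d (std_matrix d A Es u) \<theta> 0 $$ (d, 0)"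
proof -
  let ?n = "d+1" and ?S = "std_basis_mat d Es u"
  have A: "A \<in> carrier_mat ?n ?n"
    by (rule leonard_system_carrier[OF ls])
  obtain Si where Si: "Si \<in> carrier_mat ?n ?n" "?S * Si = 1\<^sub>m ?n" "Si * ?S = 1\<^sub>m ?n"
    and Es: "\<And>k. k \<le> d \<Longrightarrow> Es k = ?S * diag_unit_mat ?n k * Si" and Si_u: "Si *\<^sub>v u = vec ?n (\<lambda>_. 1)"
    using leonard_system_std_basis_inverse[OF ls u w] by blast
  obtain Y Yi where Y: "Y \<in> carrier_mat ?n ?n" "Yi \<in> carrier_mat ?n ?n"
    and E0: "E 0 = Y * diag_unit_mat ?n 0 * Yi"
    using idem_ordering_diagonalization[OF A io] by (metis le0)
  have E0_carrier: "E 0 \<in> carrier_mat ?n ?n"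
    unfolding E0 using Y by (meson mult_carrier_mat diag_unit_mat_carrier)
  have "\<exists>c. E 0 *\<^sub>v x = c \<cdot>\<^sub>v u" if "x \<in> carrier_vec ?n" for x
    using similar_diag_unit_mult_vec_parallel[OF Y _ w(1) that] u(2) unfolding w(2) E0 by simp
  then have "mtrace (E 0 * Es 0) = (Si * E 0 * ?S) $$ (d, 0)"
    using rank_one_similar_col0_eq_trace[OF std_basis_mat_carrier Si(1) E0_carrier u(1) Si_u]
      Es[OF le0] by simp
  also have "Si * E 0 * ?S = prim_idem d (std_matrix d A Es u) \<theta> 0"
    using io unfolding std_matrix_eq[OF A Si] idem_ordering_def
    by (simp add: similar_prim_idem[OF A std_basis_mat_carrier Si])
  finally show ?thesis .
qed

theorem theorem11p5:
  fixes d :: nat and A As :: "'a::field mat" and E Es :: "nat \<Rightarrow> 'a mat"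
    and \<theta> :: "nat \<Rightarrow> 'a" and u :: "'a vec"
  assumes "leonard_system d A As E Es"
    and "idem_ordering d A E \<theta>"
    and "u \<in> carrier_vec (d+1)" and "u \<noteq> 0\<^sub>v (d+1)"
    and "\<exists>w \<in> carrier_vec (d+1). u = E 0 *\<^sub>v w"
  shows "(\<Prod>i\<in>{1..d}. \<theta> 0 - \<theta> i) = lnu (E 0) (Es 0) * (\<Prod>i\<in>{1..d}. lc d A Es u i)"
proof -
  obtain w where w: "w \<in> carrier_vec (d+1)" "u = E 0 *\<^sub>v w"
    using assms(5) by blast
  note B = leonard_system_std_matrix[OF assms(1,3,4) w]
  have "mtrace (E 0 * Es 0) = prim_idem d (std_matrix d A Es u) \<theta> 0 $$ (d, 0)"
    by (rule leonard_system_trace_E0_Es0[OF assms(1-4) w])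
  also have "\<dots> = (\<Prod>i\<in>{1..d}. lc d A Es u i) / (\<Prod>i\<in>{1..d}. \<theta> 0 - \<theta> i)"
    using prim_idem_0_corner[OF B(1)] B(2) unfolding lc_def unreduced_upper_hessenberg_def by simp
  finally have trace: "mtrace (E 0 * Es 0) = (\<Prod>i\<in>{1..d}. lc d A Es u i) / (\<Prod>i\<in>{1..d}. \<theta> 0 - \<theta> i)" .
  have "(\<Prod>i\<in>{1..d}. lc d A Es u i) \<noteq> 0"
    using B unfolding lc_def unreduced_upper_hessenberg_def by simp
  moreover have "(\<Prod>i\<in>{1..d}. \<theta> 0 - \<theta> i) \<noteq> 0"
    using assms(2) by (auto simp: idem_ordering_def dest: inj_onD[of \<theta> _ 0])
  ultimately show ?thesis
    unfolding lnu_def trace by simp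
qed

end
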